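(* Assume $c_\star>2$. For all $\beta>0$, $\pi_n^\circ(x)=1/|\mathcal V_n^\circ|$ for all $x\in\mathcal V_n^\circ$. Moreover there is an event $\Omega'\subset\Omega$ with $\mathbb P(\Omega')=1$ such that on $\Omega'$, for all but a finite number of indices $n$, $$|\mathcal V_n^\circ|=2^n\Big[1-n^{-2c_\star+1}\big(1+\mathcal O(n^{-(c_\star-1)})\big)\Big].$$
   Context: Let $\mathcal V_n=\{-1,1\}^n$, $\mathcal E_n$ the nearest-neighbour edges. Let $(g(x))_{x\in\mathcal V_n}$, $n\ge1$, be i.i.d. standard Gaussians on $(\Omega,\mathcal F,\mathbb P)$. Given $c_\star>0$, $u_n$ satisfies $\mathbb P(g(x)\le-u_n)=n^{-c_\star}$; $H_n(x)=\sqrt ng(x)$ if $g(x)\le-u_n$, else $0$; $\beta>0$. Call $x$ occupied if $g(x)\le-u_n$; $I_n^\star$ = occupied vertices without occupied neighbours; $\mathcal V_n^\star$ = occupied vertices not in $I_n^\star$; $\mathcal V_n^\circ=\mathcal V_n\setminus\mathcal V_n^\star$. Let $\pi_n(x)=\sum_{y:(x,y)\in\mathcal E_n}e^{-\beta\max(H_n(y),H_n(x))}\big/\sum_{x'\in\mathcal V_n}\sum_{y:(x',y)\in\mathcal E_n}e^{-\beta\max(H_n(y),H_n(x'))}$ (the reversible invariant measure of the Metropolis jump chain $J_n$), and $\pi_n^\circ(x)=\pi_n(x)/\sum_{x'\in\mathcal V_n^\circ}\pi_n(x')$, $x\in\mathcal V_n^\circ$ (the invariant measure of $J_n$ observed at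 its visits to $\mathcal V_n^\circ$). *)

theory Defs
  imports "HOL-Probability.Probability" "HOL-Library.Landau_Symbols"
begin

definition Vn :: "nat \<Rightarrow> int list set" where
  "Vn n = {x. length x = n \<and> set x \<subseteq> {-1, 1}}"

definition adjacent :: "nat \<Rightarrow> int list \<Rightarrow> int list \<Rightarrow> bool" where
  "adjacent n x y \<longleftrightarrow> x \<in> Vn n \<and> y \<in> Vn n \<and> card {i. i < n \<and> x ! i \<noteq> y ! i} = 1"

definition nbrs :: "nat \<Rightarrow> int list \<Rightarrow> int list set" where
  "nbrs n x = {y \<in> Vn n. adjacent n x y}"

text \<open>Unnormalised invariant weight of the Metropolis jump chain for energy h.\<close>
definition jweight :: "real \<Rightarrow> (int list \<Rightarrow> real) \<Rightarrow> nat \<Rightarrow> int list \<Rightarrow> real" where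
  "jweight \<beta> h n x = (\<Sum>y\<in>nbrs n x. exp (- \<beta> * max (h y) (h x)))"

definition pi_n :: "real \<Rightarrow> (int list \<Rightarrow> real) \<Rightarrow> nat \<Rightarrow> int list \<Rightarrow> real" where
  "pi_n \<beta> h n x = jweight \<beta> h n x / (\<Sum>x'\<in>Vn n. jweight \<beta> h n x')"

definition Istar :: "(int list \<Rightarrow> bool) \<Rightarrow> nat \<Rightarrow> int list set" where
  "Istar occ n = {x \<in> Vn n. occ x \<and> (\<forall>y\<in>nbrs n x. \<not> occ y)}"

definition Vstar :: "(int list \<Rightarrow> bool) \<Rightarrow> nat \<Rightarrow> int list set" where
  "Vstar occ n = {x \<in> Vn n. occ x} - Istar occ n"

definition Vcirc :: "(int list \<Rightarrow> bool) \<Rightarrow> nat \<Rightarrow> int list set" where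
  "Vcirc occ n = Vn n - Vstar occ n"

definition pi_circ :: "real \<Rightarrow> (int list \<Rightarrow> real) \<Rightarrow> (int list \<Rightarrow> bool) \<Rightarrow> nat \<Rightarrow> int list \<Rightarrow> real" where
  "pi_circ \<beta> h occ n x = pi_n \<beta> h n x / (\<Sum>x'\<in>Vcirc occ n. pi_n \<beta> h n x')"

definition occupied :: "(nat \<times> int list \<Rightarrow> 'a \<Rightarrow> real) \<Rightarrow> (nat \<Rightarrow> real) \<Rightarrow> nat \<Rightarrow> 'a \<Rightarrow> int list \<Rightarrow> bool" where
  "occupied g u n \<omega> x \<longleftrightarrow> g (n, x) \<omega> \<le> - u n"

definition Hn :: "(nat \<times> int list \<Rightarrow> 'a \<Rightarrow> real) \<Rightarrow> (nat \<Rightarrow> real) \<Rightarrow> nat \<Rightarrow> 'a \<Rightarrow> int list \<Rightarrow> real" where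
  "Hn g u n \<omega> x = (if occupied g u n \<omega> x then sqrt (real n) * g (n, x) \<omega> else 0)"

end

theory Submission
  imports Defs "HOL-Real_Asymp.Real_Asymp"
begin

text \<open>
  Energies vanish off the occupied set and are non-positive on it: the threshold \<open>u n\<close> is
  positive because \<open>n powr -c < 1/2\<close>. A vertex of \<open>V\<^sup>\<circ>\<close> is vacant or has only vacant
  neighbours, so every edge at it carries Metropolis weight \<open>exp 0 = 1\<close>. Hence all vertices of
  \<open>V\<^sup>\<circ>\<close> have weight \<open>n\<close> and \<open>\<pi>\<^sup>\<circ>\<close> is uniform.

  The complement \<open>V\<^sup>*\<close> consists of the occupied vertices with an occupied neighbour. Its size
  is a sum of \<open>2^n\<close> indicators of mean \<open>q = p (1 - (1 - p)^n) = n p^2 (1 + O(n p))\<close>, where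
  \<open>p = n powr -c\<close>, and two of them are independent unless their vertices are within
  distance 2, so the variance is at most \<open>2^n (n + 1)^2 p\<close>. Chebyshev's inequality at
  deviation \<open>2^n n^2 p^3\<close> gives probabilities summable in \<open>n\<close>, and Borel-Cantelli yields the
  expansion almost surely.
\<close>

section \<open>The hypercube\<close>

definition flip :: "int list \<Rightarrow> nat \<Rightarrow> int list" where
  "flip x i = x[i := - (x ! i)]"

lemma Vn_eq_lists: "Vn n = {xs. set xs \<subseteq> {-1, 1} \<and> length xs = n}"
  by (auto simp: Vn_def)

lemma finite_Vn: "finite (Vn n)"
  unfolding Vn_eq_lists by (rule finite_lists_length_eq) simp

lemma card_Vn: "card (Vn n) = 2 ^ n"
  unfolding Vn_eq_lists by (subst card_lists_length_eq) (simp_all add: numeral_2_eq_2)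

lemma Vn_nth_cases: "x \<in> Vn n \<Longrightarrow> i < n \<Longrightarrow> x ! i = -1 \<or> x ! i = 1"
  unfolding Vn_def using nth_mem by fastforce

lemma flip_in_Vn: "x \<in> Vn n \<Longrightarrow> i < n \<Longrightarrow> flip x i \<in> Vn n"
  using Vn_nth_cases[of x n i] set_update_subset_insert[of x i "- (x ! i)"]
  by (auto simp: Vn_def flip_def)

lemma coords_differ_flip:
  "x \<in> Vn n \<Longrightarrow> i < n \<Longrightarrow> {j. j < n \<and> x ! j \<noteq> flip x i ! j} = {i}"
  using Vn_nth_cases[of x n i] by (auto simp: Vn_def flip_def nth_list_update split: if_splits)

lemma nbrs_obtains_flip:
  assumes x: "x \<in> Vn n" and "y \<in> nbrs n x"
  obtains i where "i < n" and "y = flip x i"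
proof -
  from \<open>y \<in> nbrs n x\<close> have y: "y \<in> Vn n" and "card {i. i < n \<and> x ! i \<noteq> y ! i} = 1"
    by (auto simp: nbrs_def adjacent_def)
  then obtain i where i: "{j. j < n \<and> x ! j \<noteq> y ! j} = {i}"
    by (metis card_1_singletonE)
  then have "i < n" and "x ! i \<noteq> y ! i"
    by auto
  have "y = flip x i"
  proof (rule nth_equalityI)
    show "length y = length (flip x i)"
      using x y by (simp add: Vn_def flip_def)
  next
    fix j assume "j < length y"
    with y have "j < n" by (simp add: Vn_def)
    show "y ! j = flip x i ! j"
    proof (cases "j = i")
      case True
      have "y ! i = - (x ! i)"
        using Vn_nth_cases[OF x \<open>i < n\<close>] Vn_nth_cases[OF y \<open>i < n\<close>] \<open>x ! i \<noteq> y ! i\<close>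
        by auto
      moreover have "i < length x"
        using x \<open>i < n\<close> by (simp add: Vn_def)
      ultimately show ?thesis
        using True by (simp add: flip_def)
    next
      case False
      then have "x ! j = y ! j"
        using i \<open>j < n\<close> by blast
      with False show ?thesis
        by (simp add: flip_def)
    qed
  qed
  with \<open>i < n\<close> show ?thesis
    using that by blast
qed

lemma nbrs_eq_flip_image:
  assumes "x \<in> Vn n"
  shows "nbrs n x = flip x ` {..<n}"
proof
  show "nbrs n x \<subseteq> flip x ` {..<n}"
    using assms by (blast elim: nbrs_obtains_flip)
  show "flip x ` {..<n} \<subseteq> nbrs n x"
    using assms flip_in_Vn coords_differ_flip by (auto simp: nbrs_def adjacent_def)
qed

lemma inj_on_flip: "x \<in> Vn n \<Longrightarrow> inj_on (flip x) {..<n}"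
  by (rule inj_onI) (metis coords_differ_flip lessThan_iff singleton_inject)

lemma card_nbrs: "x \<in> Vn n \<Longrightarrow> card (nbrs n x) = n"
  by (simp add: nbrs_eq_flip_image card_image inj_on_flip)

lemma nbrs_subset_Vn: "nbrs n x \<subseteq> Vn n"
  by (auto simp: nbrs_def)

lemma finite_nbrs: "finite (nbrs n x)"
  using finite_subset[OF nbrs_subset_Vn finite_Vn] .

lemma self_notin_nbrs: "x \<notin> nbrs n x"
  by (auto simp: nbrs_def adjacent_def)

lemma nbrs_sym: "y \<in> nbrs n x \<Longrightarrow> x \<in> nbrs n y"
proof -
  have "{i. i < n \<and> x ! i \<noteq> y ! i} = {i. i < n \<and> y ! i \<noteq> x ! i}"
    by auto
  then show "y \<in> nbrs n x \<Longrightarrow> x \<in> nbrs n y"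
    by (auto simp: nbrs_def adjacent_def)
qed

lemma card_insert_nbrs: "x \<in> Vn n \<Longrightarrow> card (insert x (nbrs n x)) = n + 1"
  by (simp add: finite_nbrs self_notin_nbrs card_nbrs)

definition ball2 :: "nat \<Rightarrow> int list \<Rightarrow> int list set" where
  "ball2 n x = (\<Union>z\<in>insert x (nbrs n x). insert z (nbrs n z))"

lemma finite_ball2: "finite (ball2 n x)"
  by (simp add: ball2_def finite_nbrs)

lemma card_ball2_le: assumes x: "x \<in> Vn n" shows "card (ball2 n x) \<le> (n + 1) ^ 2"
proof -
  have "card (ball2 n x) \<le> (\<Sum>z\<in>insert x (nbrs n x). card (insert z (nbrs n z)))"
    unfolding ball2_def by (rule card_UN_le) (simp add: finite_nbrs)
  also have "\<dots> = (\<Sum>z\<in>insert x (nbrs n x). n + 1)"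
    using x nbrs_subset_Vn[of n x] by (intro sum.cong refl card_insert_nbrs) auto
  also have "\<dots> = (n + 1) ^ 2"
    using card_insert_nbrs[OF x] by (simp add: power2_eq_square)
  finally show ?thesis .
qed

lemma closed_nbhds_disjoint:
  "x' \<notin> ball2 n x \<Longrightarrow> insert x (nbrs n x) \<inter> insert x' (nbrs n x') = {}"
  unfolding ball2_def using nbrs_sym by blast

section \<open>Uniformity of the invariant measure on \<open>V\<^sup>\<circ>\<close>\<close>

lemma jweight_Vcirc:
  assumes nonpos: "\<And>y. occ y \<Longrightarrow> h y \<le> 0" and zero: "\<And>y. \<not> occ y \<Longrightarrow> h y = 0"
    and z: "z \<in> Vcirc occ n"
  shows "jweight \<beta> h n z = real n"
proof -
  have zV: "z \<in> Vn n" and isolated: "occ z \<Longrightarrow> \<forall>y\<in>nbrs n z. \<not> occ y"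
    using z by (auto simp: Vcirc_def Vstar_def Istar_def)
  have "max (h y) (h z) = 0" if "y \<in> nbrs n z" for y
  proof (cases "occ z")
    case True
    then show ?thesis
      using that isolated nonpos[of z] zero[of y] by (simp add: max_def)
  next
    case False
    then show ?thesis
      using nonpos[of y] zero[of y] zero[of z] by (cases "occ y") (simp_all add: max_def)
  qed
  then have "jweight \<beta> h n z = (\<Sum>y\<in>nbrs n z. 1)"
    unfolding jweight_def by (intro sum.cong) auto
  then show ?thesis
    using card_nbrs[OF zV] by simp
qed

lemma jweight_pos: "n \<ge> 1 \<Longrightarrow> x \<in> Vn n \<Longrightarrow> jweight \<beta> h n x > 0"
  unfolding jweight_def using card_nbrs[of x n] finite_nbrs[of n x]
  by (intro sum_pos) auto

lemma pi_circ_uniform: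
  assumes n: "n \<ge> 1"
    and nonpos: "\<And>y. occ y \<Longrightarrow> h y \<le> 0" and zero: "\<And>y. \<not> occ y \<Longrightarrow> h y = 0"
    and x: "x \<in> Vcirc occ n"
  shows "pi_circ \<beta> h occ n x = 1 / real (card (Vcirc occ n))"
proof -
  define Z where "Z = (\<Sum>x'\<in>Vn n. jweight \<beta> h n x')"
  have "Z > 0"
    unfolding Z_def using x jweight_pos[OF n] finite_Vn
    by (intro sum_pos) (auto simp: Vcirc_def)
  have pi_n_Vcirc: "pi_n \<beta> h n z = real n / Z" if "z \<in> Vcirc occ n" for z
    unfolding pi_n_def Z_def[symmetric] using jweight_Vcirc[OF nonpos zero that] by simp
  have "card (Vcirc occ n) > 0"
    using x finite_Vn by (auto simp: card_gt_0_iff Vcirc_def)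
  have "(\<Sum>x'\<in>Vcirc occ n. pi_n \<beta> h n x') = real (card (Vcirc occ n)) * (real n / Z)"
    using pi_n_Vcirc by simp
  then show ?thesis
    unfolding pi_circ_def pi_n_Vcirc[OF x] using n \<open>Z > 0\<close> \<open>card (Vcirc occ n) > 0\<close> by simp
qed

section \<open>Elementary and probabilistic estimates\<close>

lemma one_minus_power_le:
  fixes p :: real
  assumes "0 \<le> p" "p \<le> 1"
  shows "(1 - p) ^ n \<le> 1 - real n * p + (real n * p) ^ 2 / 2"
proof (induction n)
  case 0
  then show ?case by simp
next
  case (Suc n)
  have "(1 - p) ^ Suc n \<le> (1 - p) * (1 - real n * p + (real n * p) ^ 2 / 2)"
    using Suc assms by (simp add: mult_left_mono)
  also have "\<dots> = 1 - real (Suc n) * p + (real (Suc n) * p) ^ 2 / 2 - (p ^ 2 / 2 + (real n) ^ 2 * p ^ 3 / 2)"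
    by (simp add: field_simps power2_eq_square power3_eq_cube)
  also have "\<dots> \<le> 1 - real (Suc n) * p + (real (Suc n) * p) ^ 2 / 2"
  proof -
    have "0 \<le> (real n) ^ 2 * p ^ 3"
      using assms by simp
    then show ?thesis
      using zero_le_power2[of p] by linarith
  qed
  finally show ?case .
qed

lemma star_prob_approx:
  fixes p :: real
  assumes "0 \<le> p" "p \<le> 1"
  shows "\<bar>p * (1 - (1 - p) ^ n) - real n * p ^ 2\<bar> \<le> (real n) ^ 2 * p ^ 3 / 2"
proof -
  define d where "d = (1 - p) ^ n - (1 - real n * p)"
  have "0 \<le> d"
    using Bernoulli_inequality[of "- p" n] assms by (simp add: d_def)
  have d_le: "d \<le> (real n * p) ^ 2 / 2"
    unfolding d_def using one_minus_power_le[OF assms, of n] by linarith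
  have "p * (1 - (1 - p) ^ n) - real n * p ^ 2 = - (p * d)"
    by (simp add: d_def algebra_simps power2_eq_square)
  then have "\<bar>p * (1 - (1 - p) ^ n) - real n * p ^ 2\<bar> = p * d"
    using assms(1) \<open>0 \<le> d\<close> by simp
  also have "\<dots> \<le> p * ((real n * p) ^ 2 / 2)"
    using d_le assms(1) by (rule mult_left_mono)
  finally show ?thesis
    by (simp add: power2_eq_square power3_eq_cube algebra_simps)
qed

lemma relative_error_compose:
  fixes S T Q N \<epsilon> :: real
  assumes T: "T > 0" and N: "N > 0"
    and S_close: "\<bar>S - T * Q\<bar> \<le> T * \<epsilon> * N" and Q_close: "\<bar>Q - N\<bar> \<le> \<epsilon> * N / 2"
  shows "\<bar>S / (T * N) - 1\<bar> \<le> 2 * \<epsilon>"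
proof -
  have "S - T * N = (S - T * Q) + T * (Q - N)"
    by (simp add: algebra_simps)
  then have "\<bar>S - T * N\<bar> \<le> \<bar>S - T * Q\<bar> + T * \<bar>Q - N\<bar>"
    using abs_triangle_ineq[of "S - T * Q" "T * (Q - N)"] T by (simp add: abs_mult)
  also have "\<dots> \<le> T * \<epsilon> * N + T * (\<epsilon> * N / 2)"
    using S_close Q_close T by (intro add_mono mult_left_mono) auto
  also have "\<dots> \<le> 2 * \<epsilon> * (T * N)"
  proof -
    have "0 \<le> \<epsilon> * N"
      using Q_close abs_ge_zero[of "Q - N"] by linarith
    then have "0 \<le> T * (\<epsilon> * N)"
      using T by simp
    then show ?thesis
      by (simp add: algebra_simps)
  qed
  finally have "\<bar>S - T * N\<bar> \<le> 2 * \<epsilon> * (T * N)" .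
  moreover have "S / (T * N) - 1 = (S - T * N) / (T * N)"
    using T N by (simp add: field_simps)
  ultimately show ?thesis
    using T N by (simp add: abs_divide pos_divide_le_eq)
qed

lemma std_normal_atMost_zero_ge_half:
  "measure (density lborel (\<lambda>t. ennreal (std_normal_density t))) {..0} \<ge> 1 / 2"
proof -
  define D where "D = density lborel (\<lambda>t. ennreal (std_normal_density t))"
  interpret D: prob_space D
    unfolding D_def by (rule prob_space_normal_density) simp
  have sets_D: "sets D = sets borel"
    by (simp add: D_def)
  have "emeasure D {..0} = (\<integral>\<^sup>+ x. ennreal (std_normal_density x) * indicator {..0} x \<partial>lborel)"
    unfolding D_def by (rule emeasure_density) auto
  also have "\<dots> = (\<integral>\<^sup>+ x. ennreal (std_normal_density (0 + -1 * x)) * indicator {..0} (0 + -1 * x) \<partial>lborel)"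
    using nn_integral_real_affine[of "\<lambda>x. ennreal (std_normal_density x) * indicator {..0} x" "-1" 0]
    by simp
  also have "\<dots> = (\<integral>\<^sup>+ x. ennreal (std_normal_density x) * indicator {0..} x \<partial>lborel)"
    by (auto simp: normal_density_def intro!: nn_integral_cong split: split_indicator)
  also have "\<dots> = emeasure D {0..}"
    unfolding D_def by (rule emeasure_density[symmetric]) auto
  finally have halves_equal: "measure D {..0} = measure D {0..}"
    by (simp add: measure_def)
  have "{..0} \<union> {0..} = (UNIV :: real set)"
    by auto
  then have "1 = measure D ({..0} \<union> {0..})"
    using D.prob_space by (simp add: D_def)
  also have "\<dots> \<le> measure D {..0} + measure D {0..}"
    by (rule measure_subadditive) (auto simp: D.emeasure_finite sets_D)
  finally show ?thesis
    using halves_equal by (simp add: D_def)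
qed

lemma (in prob_space) variance_sum_bounded:
  fixes X :: "'i \<Rightarrow> 'a \<Rightarrow> real"
  assumes rv: "\<And>i. i \<in> I \<Longrightarrow> random_variable borel (X i)"
    and bounded: "\<And>i \<omega>. i \<in> I \<Longrightarrow> \<bar>X i \<omega>\<bar> \<le> B"
  shows "variance (\<lambda>\<omega>. \<Sum>i\<in>I. X i \<omega>) =
    (\<Sum>i\<in>I. \<Sum>j\<in>I. expectation (\<lambda>\<omega>. (X i \<omega> - expectation (X i)) * (X j \<omega> - expectation (X j))))"
proof -
  define Y where "Y i \<omega> = X i \<omega> - expectation (X i)" for i \<omega>
  have int_X: "integrable M (X i)" if "i \<in> I" for i
    using rv bounded that by (intro integrable_const_bound[where B=B]) auto
  have Y_bounded: "\<bar>Y i \<omega>\<bar> \<le> 2 * B" if "i \<in> I" for i \<omega>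
  proof -
    have "\<bar>expectation (X i)\<bar> \<le> expectation (\<lambda>\<omega>. \<bar>X i \<omega>\<bar>)"
      using integral_norm_bound[of M "X i"] by simp
    also have "\<dots> \<le> expectation (\<lambda>\<omega>. B)"
      using int_X[OF that] bounded[OF that] by (intro integral_mono) auto
    finally have "\<bar>expectation (X i)\<bar> \<le> B"
      by (simp add: prob_space)
    then show ?thesis
      using bounded[OF that, of \<omega>] by (simp add: Y_def)
  qed
  have int_YY: "integrable M (\<lambda>\<omega>. Y i \<omega> * Y j \<omega>)" if "i \<in> I" "j \<in> I" for i j
  proof (rule integrable_const_bound[where B="2 * B * (2 * B)"])
    have "\<bar>Y i \<omega>\<bar> * \<bar>Y j \<omega>\<bar> \<le> 2 * B * (2 * B)" for \<omega>
      using Y_bounded[OF that(1), of \<omega>] Y_bounded[OF that(2), of \<omega>]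
      by (intro mult_mono) auto
    then show "AE \<omega> in M. norm (Y i \<omega> * Y j \<omega>) \<le> 2 * B * (2 * B)"
      by (simp add: abs_mult)
    show "random_variable borel (\<lambda>\<omega>. Y i \<omega> * Y j \<omega>)"
      using rv that unfolding Y_def by measurable
  qed
  have "expectation (\<lambda>\<omega>. \<Sum>i\<in>I. X i \<omega>) = (\<Sum>i\<in>I. expectation (X i))"
    using int_X by (rule Bochner_Integration.integral_sum)
  then have "(\<Sum>i\<in>I. X i \<omega>) - expectation (\<lambda>\<omega>. \<Sum>i\<in>I. X i \<omega>) = (\<Sum>i\<in>I. Y i \<omega>)" for \<omega>
    by (simp add: Y_def sum_subtractf)
  then have "variance (\<lambda>\<omega>. \<Sum>i\<in>I. X i \<omega>) = expectation (\<lambda>\<omega>. \<Sum>i\<in>I. \<Sum>j\<in>I. Y i \<omega> * Y j \<omega>)"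
    by (simp add: power2_eq_square sum_product)
  also have "\<dots> = (\<Sum>i\<in>I. \<Sum>j\<in>I. expectation (\<lambda>\<omega>. Y i \<omega> * Y j \<omega>))"
    using int_YY by (simp add: Bochner_Integration.integral_sum)
  finally show ?thesis
    by (simp add: Y_def)
qed

lemma (in prob_space) AE_eventually_deviation_less:
  fixes X :: "nat \<Rightarrow> 'a \<Rightarrow> real"
  assumes rv: "\<And>n. random_variable borel (X n)"
    and square_integrable: "\<And>n. integrable M (\<lambda>\<omega>. X n \<omega> ^ 2)"
    and a_pos: "\<And>n. a n > 0"
    and summable: "summable (\<lambda>n. variance (X n) / a n ^ 2)"
  shows "AE \<omega> in M. \<forall>\<^sub>F n in sequentially. \<bar>X n \<omega> - expectation (X n)\<bar> < a n"
proof -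
  define B where "B n = {\<omega> \<in> space M. a n \<le> \<bar>X n \<omega> - expectation (X n)\<bar>}" for n
  have B_events [measurable]: "B n \<in> events" for n
    using rv[of n] unfolding B_def by measurable
  have "prob (B n) \<le> variance (X n) / a n ^ 2" for n
    unfolding B_def by (rule Chebyshev_inequality[OF rv square_integrable a_pos])
  then have "summable (\<lambda>n. prob (B n))"
    by (intro summable_comparison_test'[OF summable]) auto
  then have "AE \<omega> in M. \<forall>\<^sub>F n in sequentially. \<omega> \<in> space M - B n"
    by (intro borel_cantelli_AE1) (auto simp: emeasure_eq_measure)
  then show ?thesis
    by (rule eventually_mono) (auto simp: B_def elim: eventually_mono)
qed

lemma (in prob_space) AE_imp_prob_one_event:
  assumes "AE \<omega> in M. P \<omega>"
  shows "\<exists>\<Omega>'\<in>events. prob \<Omega>' = 1 \<and> (\<forall>\<omega>\<in>\<Omega>'. P \<omega>)"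
proof -
  obtain N where P: "\<And>\<omega>. \<omega> \<in> space M - N \<Longrightarrow> P \<omega>" and N: "N \<in> null_sets M"
    using AE_E3[OF assms] by blast
  moreover have "prob N = 0"
    using N by (simp add: measure_def null_setsD1)
  ultimately have "prob (space M - N) = 1"
    by (simp add: prob_compl[OF null_setsD2[OF N]])
  with N P show ?thesis
    by (intro bexI[of _ "space M - N"]) auto
qed

section \<open>The random landscape\<close>

definition sites :: "(nat \<times> int list) set" where
  "sites = {(n, x). n \<ge> 1 \<and> x \<in> Vn n}"

locale gaussian_landscape = prob_space M for M :: "'a measure" +
  fixes g :: "nat \<times> int list \<Rightarrow> 'a \<Rightarrow> real" and u :: "nat \<Rightarrow> real" and cs :: real
  assumes indep_field: "indep_vars (\<lambda>_. borel) g sites"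
    and std_normal_field: "\<And>n x. n \<ge> 1 \<Longrightarrow> x \<in> Vn n \<Longrightarrow>
      distributed M lborel (g (n, x)) (\<lambda>t. ennreal (std_normal_density t))"
    and threshold: "\<And>n. n \<ge> 2 \<Longrightarrow>
      measure (density lborel (\<lambda>t. ennreal (std_normal_density t))) {.. - u n} = real n powr (- cs)"
    and exponent_gt_1: "cs > 1"
begin

definition occ_prob :: "nat \<Rightarrow> real" where
  "occ_prob n = real n powr (- cs)"

lemma occ_prob_bounds: assumes n: "n \<ge> 2" shows "0 < occ_prob n" and "occ_prob n < 1 / 2"
proof -
  show "0 < occ_prob n"
    using n by (simp add: occ_prob_def)
  have "real n powr (- cs) < real n powr (- 1)"
    using n exponent_gt_1 by (intro powr_less_mono) auto
  also have "\<dots> \<le> 1 / 2"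
    using n by (simp add: powr_minus divide_simps)
  finally show "occ_prob n < 1 / 2"
    by (simp add: occ_prob_def)
qed

lemma threshold_pos: assumes n: "n \<ge> 2" shows "u n > 0"
proof (rule ccontr)
  assume "\<not> u n > 0"
  define D where "D = density lborel (\<lambda>t. ennreal (std_normal_density t))"
  interpret D: prob_space D
    unfolding D_def by (rule prob_space_normal_density) simp
  have "measure D {..0} \<le> measure D {.. - u n}"
    using \<open>\<not> u n > 0\<close> by (intro D.finite_measure_mono) (auto simp: D_def)
  also have "\<dots> = occ_prob n"
    using threshold[OF n] by (simp add: D_def occ_prob_def)
  finally show False
    using std_normal_atMost_zero_ge_half occ_prob_bounds[OF n] by (simp add: D_def)
qed

lemma pi_circ_Hn_uniform:
  assumes n: "n \<ge> 2" and x: "x \<in> Vcirc (occupied g u n \<omega>) n"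
  shows "pi_circ \<beta> (Hn g u n \<omega>) (occupied g u n \<omega>) n x = 1 / real (card (Vcirc (occupied g u n \<omega>) n))"
proof (rule pi_circ_uniform[OF _ _ _ x])
  show "Hn g u n \<omega> y \<le> 0" if "occupied g u n \<omega> y" for y
    using that threshold_pos[OF n] by (simp add: Hn_def occupied_def mult_nonneg_nonpos)
qed (use n in \<open>auto simp: Hn_def\<close>)

definition occ_ind :: "nat \<times> int list \<Rightarrow> 'a \<Rightarrow> real" where
  "occ_ind i \<omega> = indicator {.. - u (fst i)} (g i \<omega>)"

lemma occ_ind_eq: "occ_ind (n, x) \<omega> = of_bool (occupied g u n \<omega> x)"
  by (simp add: occ_ind_def occupied_def indicator_def)

lemma prod_vacant_eq:
  "finite N \<Longrightarrow> (\<Prod>y\<in>N. 1 - occ_ind (n, y) \<omega>) = of_bool (\<forall>y\<in>N. \<not> occupied g u n \<omega> y)"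
  by (induction N rule: finite_induct) (auto simp: occ_ind_eq)

lemma random_variable_field: "i \<in> sites \<Longrightarrow> random_variable borel (g i)"
  using indep_field unfolding indep_vars_def by auto

lemma random_variable_occ_ind [measurable]: "i \<in> sites \<Longrightarrow> random_variable borel (occ_ind i)"
  unfolding occ_ind_def using random_variable_field by measurable

lemma integrable_occ_ind: "i \<in> sites \<Longrightarrow> integrable M (occ_ind i)"
  by (rule integrable_const_bound[where B=1]) (auto simp: occ_ind_def split: split_indicator)

lemma indep_occ_ind: "indep_vars (\<lambda>_. borel) occ_ind sites"
  unfolding occ_ind_def[abs_def] by (rule indep_vars_compose2[OF indep_field]) auto

lemma expectation_occ_ind:
  assumes "n \<ge> 2" "x \<in> Vn n"
  shows "expectation (occ_ind (n, x)) = occ_prob n"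
proof -
  have d: "distributed M lborel (g (n, x)) (\<lambda>t. ennreal (std_normal_density t))"
    using std_normal_field assms by simp
  have "expectation (occ_ind (n, x)) = integral\<^sup>L (distr M lborel (g (n, x))) (indicator {.. - u n} :: real \<Rightarrow> real)"
    unfolding occ_ind_def fst_conv using distributed_measurable[OF d] by (intro integral_distr[symmetric]) auto
  also have "\<dots> = measure (density lborel (\<lambda>t. ennreal (std_normal_density t))) {.. - u n}"
    unfolding distributed_distr_eq_density[OF d] by simp
  finally show ?thesis
    using threshold assms by (simp add: occ_prob_def)
qed

lemma expectation_occupied_vacant:
  assumes n: "n \<ge> 2" and x: "x \<in> Vn n" and N: "N \<subseteq> Vn n" "finite N" "x \<notin> N"
  shows "expectation (\<lambda>\<omega>. occ_ind (n, x) \<omega> * (\<Prod>y\<in>N. 1 - occ_ind (n, y) \<omega>))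
    = occ_prob n * (1 - occ_prob n) ^ card N"
proof -
  define J where "J = insert (n, x) (Pair n ` N)"
  define F where "F i \<omega> = (if i = (n, x) then occ_ind i \<omega> else 1 - occ_ind i \<omega>)" for i \<omega>
  have J_sites: "J \<subseteq> sites"
    using N x n by (auto simp: J_def sites_def)
  have "indep_vars (\<lambda>_. borel) (\<lambda>i \<omega>. (\<lambda>i t. if i = (n, x) then t else 1 - t) i (occ_ind i \<omega>)) sites"
    by (rule indep_vars_compose2[OF indep_occ_ind]) auto
  then have "indep_vars (\<lambda>_. borel) F J"
    unfolding F_def by (rule indep_vars_subset[OF _ J_sites])
  moreover have "integrable M (F i)" if "i \<in> J" for i
    using integrable_occ_ind[of i] that J_sites unfolding F_def[abs_def]
    by (cases "i = (n, x)") auto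
  ultimately have E_prod: "expectation (\<lambda>\<omega>. \<Prod>i\<in>J. F i \<omega>) = (\<Prod>i\<in>J. expectation (F i))"
    using N by (intro indep_vars_lebesgue_integral) (auto simp: J_def)
  have prod_J: "(\<Prod>i\<in>J. f i) = f (n, x) * (\<Prod>y\<in>N. f (n, y))" for f :: "_ \<Rightarrow> real"
    using N by (simp add: J_def prod.reindex inj_on_def image_iff)
  have F_vacant: "F (n, y) = (\<lambda>\<omega>. 1 - occ_ind (n, y) \<omega>)" if "y \<in> N" for y
    using that N by (auto simp: F_def)
  have "expectation (\<lambda>\<omega>. occ_ind (n, x) \<omega> * (\<Prod>y\<in>N. 1 - occ_ind (n, y) \<omega>))
      = expectation (\<lambda>\<omega>. \<Prod>i\<in>J. F i \<omega>)"
    unfolding prod_J using F_vacant by (simp add: F_def cong: prod.cong)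
  also have "\<dots> = (\<Prod>i\<in>J. expectation (F i))"
    by (rule E_prod)
  also have "\<dots> = expectation (occ_ind (n, x)) * (\<Prod>y\<in>N. expectation (\<lambda>\<omega>. 1 - occ_ind (n, y) \<omega>))"
    unfolding prod_J using F_vacant by (simp add: F_def[abs_def] cong: prod.cong)
  also have "\<dots> = occ_prob n * (\<Prod>y\<in>N. 1 - occ_prob n)"
    using N integrable_occ_ind expectation_occ_ind n x
    by (intro arg_cong2[where f="(*)"] prod.cong) (auto simp: sites_def prob_space subset_iff)
  finally show ?thesis
    by simp
qed

text \<open>The indicator of \<open>x \<in> V\<^sup>*\<close>, written as a polynomial in occupation indicators so
  that its expectation factors by independence.\<close>

definition star_ind :: "nat \<Rightarrow> int list \<Rightarrow> 'a \<Rightarrow> real" where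
  "star_ind n x \<omega> = occ_ind (n, x) \<omega> * (1 - (\<Prod>y\<in>nbrs n x. 1 - occ_ind (n, y) \<omega>))"

definition star_prob :: "nat \<Rightarrow> real" where
  "star_prob n = occ_prob n * (1 - (1 - occ_prob n) ^ n)"

lemma star_ind_eq:
  "star_ind n x \<omega> = of_bool (occupied g u n \<omega> x \<and> (\<exists>y\<in>nbrs n x. occupied g u n \<omega> y))"
  by (simp add: star_ind_def prod_vacant_eq finite_nbrs occ_ind_eq)

lemma random_variable_vacant:
  "n \<ge> 1 \<Longrightarrow> N \<subseteq> Vn n \<Longrightarrow> random_variable borel (\<lambda>\<omega>. \<Prod>y\<in>N. 1 - occ_ind (n, y) \<omega>)"
  by (intro borel_measurable_prod borel_measurable_diff borel_measurable_const random_variable_occ_ind)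
    (auto simp: sites_def)

lemma random_variable_star_ind [measurable]:
  assumes "n \<ge> 1" "x \<in> Vn n"
  shows "random_variable borel (star_ind n x)"
proof -
  have "random_variable borel (occ_ind (n, x))"
    using assms by (simp add: sites_def)
  with random_variable_vacant[OF assms(1) nbrs_subset_Vn] show ?thesis
    unfolding star_ind_def by measurable
qed

lemma integrable_star_ind: "n \<ge> 1 \<Longrightarrow> x \<in> Vn n \<Longrightarrow> integrable M (star_ind n x)"
  by (rule integrable_const_bound[where B=1]) (auto simp: star_ind_eq)

lemma expectation_star_ind:
  assumes n: "n \<ge> 2" and x: "x \<in> Vn n"
  shows "expectation (star_ind n x) = star_prob n"
proof -
  have "random_variable borel (occ_ind (n, x))"
    using n x by (simp add: sites_def)
  moreover have "\<bar>occ_ind (n, x) \<omega> * (\<Prod>y\<in>nbrs n x. 1 - occ_ind (n, y) \<omega>)\<bar> \<le> 1" for \<omega>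
    unfolding prod_vacant_eq[OF finite_nbrs] by (simp add: occ_ind_eq)
  ultimately have integrable_vacant:
    "integrable M (\<lambda>\<omega>. occ_ind (n, x) \<omega> * (\<Prod>y\<in>nbrs n x. 1 - occ_ind (n, y) \<omega>))"
    using random_variable_vacant[of n "nbrs n x"] n
    by (intro integrable_const_bound[where B=1]) (auto simp: nbrs_subset_Vn)
  have "star_ind n x = (\<lambda>\<omega>. occ_ind (n, x) \<omega> - occ_ind (n, x) \<omega> * (\<Prod>y\<in>nbrs n x. 1 - occ_ind (n, y) \<omega>))"
    by (auto simp: star_ind_def algebra_simps)
  then show ?thesis
    using integrable_vacant integrable_occ_ind[of "(n, x)"] n x
      expectation_occ_ind[OF n x] expectation_occupied_vacant[OF n x nbrs_subset_Vn finite_nbrs self_notin_nbrs]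
    by (simp add: sites_def card_nbrs star_prob_def algebra_simps)
qed

lemma star_prob_bounds: "n \<ge> 2 \<Longrightarrow> 0 \<le> star_prob n \<and> star_prob n \<le> occ_prob n"
  using occ_prob_bounds[of n] power_le_one[of "1 - occ_prob n" n]
  by (simp add: star_prob_def mult_left_le)

text \<open>Indicators of vertices at distance more than 2 are functions of disjoint families of
  occupation indicators.\<close>

lemma expectation_star_ind_mult_far:
  assumes n: "n \<ge> 2" and x: "x \<in> Vn n" and x': "x' \<in> Vn n" and far: "x' \<notin> ball2 n x"
  shows "expectation (\<lambda>\<omega>. star_ind n x \<omega> * star_ind n x' \<omega>) = star_prob n ^ 2"
proof -
  define K where "K z = Pair n ` insert z (nbrs n z)" for z
  define h where "h z f = f (n, z) * (1 - (\<Prod>y\<in>nbrs n z. 1 - f (n, y)))" for z and f :: "_ \<Rightarrow> real"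
  have K_sites: "K z \<subseteq> sites" if "z \<in> Vn n" for z
    using that nbrs_subset_Vn[of n z] n by (auto simp: K_def sites_def)
  have h_measurable: "h z \<in> borel_measurable (PiM (K z) (\<lambda>_. borel))" for z
  proof -
    have "(\<lambda>f. f i) \<in> borel_measurable (PiM (K z) (\<lambda>_. borel))" if "i \<in> K z" for i
      using measurable_component_singleton[OF that, of "\<lambda>_. borel"] by simp
    then show ?thesis
      unfolding h_def by (intro borel_measurable_times borel_measurable_diff
          borel_measurable_const borel_measurable_prod) (auto simp: K_def)
  qed
  have star_ind_factor: "star_ind n z = h z \<circ> (\<lambda>\<omega>. restrict (\<lambda>i. occ_ind i \<omega>) (K z))" for z
    by (auto simp: h_def star_ind_def K_def fun_eq_iff intro!: prod.cong)
  have "K x \<inter> K x' = {}"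
    using closed_nbhds_disjoint[OF far] by (auto simp: K_def)
  then have "indep_var (PiM (K x) (\<lambda>_. borel)) (\<lambda>\<omega>. restrict (\<lambda>i. occ_ind i \<omega>) (K x))
      (PiM (K x') (\<lambda>_. borel)) (\<lambda>\<omega>. restrict (\<lambda>i. occ_ind i \<omega>) (K x'))"
    using K_sites[OF x] K_sites[OF x'] by (intro indep_var_restrict[OF indep_occ_ind])
  then have "indep_var borel (star_ind n x) borel (star_ind n x')"
    unfolding star_ind_factor by (rule indep_var_compose) (rule h_measurable)+
  then have "expectation (\<lambda>\<omega>. star_ind n x \<omega> * star_ind n x' \<omega>)
      = expectation (star_ind n x) * expectation (star_ind n x')"
    using integrable_star_ind n x x' by (intro indep_var_lebesgue_integral) auto
  then show ?thesis
    using expectation_star_ind n x x' by (simp add: power2_eq_square)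
qed

lemma covariance_star_ind_le:
  assumes n: "n \<ge> 2" and x: "x \<in> Vn n" and x': "x' \<in> Vn n"
  shows "expectation (\<lambda>\<omega>. (star_ind n x \<omega> - expectation (star_ind n x)) * (star_ind n x' \<omega> - expectation (star_ind n x')))
    \<le> (if x' \<in> ball2 n x then occ_prob n else 0)"
proof -
  have "random_variable borel (\<lambda>\<omega>. star_ind n x \<omega> * star_ind n x' \<omega>)"
    using random_variable_star_ind[of n x] random_variable_star_ind[of n x'] n x x' by simp
  then have integrable_product: "integrable M (\<lambda>\<omega>. star_ind n x \<omega> * star_ind n x' \<omega>)"
    by (rule integrable_const_bound[where B=1, rotated]) (auto simp: star_ind_eq)
  have covariance_eq: "expectation (\<lambda>\<omega>. (star_ind n x \<omega> - expectation (star_ind n x))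
        * (star_ind n x' \<omega> - expectation (star_ind n x')))
      = expectation (\<lambda>\<omega>. star_ind n x \<omega> * star_ind n x' \<omega>) - star_prob n ^ 2"
    using integrable_product integrable_star_ind expectation_star_ind n x x'
    by (simp add: algebra_simps power2_eq_square prob_space)
  show ?thesis
  proof (cases "x' \<in> ball2 n x")
    case True
    have "expectation (\<lambda>\<omega>. star_ind n x \<omega> * star_ind n x' \<omega>) \<le> expectation (star_ind n x)"
      using integrable_product integrable_star_ind[of n x] n x
      by (intro integral_mono) (auto simp: star_ind_eq)
    then show ?thesis
      unfolding if_P[OF True]
      using covariance_eq expectation_star_ind[OF n x] star_prob_bounds[OF n]
        zero_le_power2[of "star_prob n"] by linarith
  next
    case False
    then show ?thesis
      using covariance_eq expectation_star_ind_mult_far[OF n x x'] by simp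
  qed
qed

definition card_Vstar :: "nat \<Rightarrow> 'a \<Rightarrow> real" where
  "card_Vstar n \<omega> = real (card (Vstar (occupied g u n \<omega>) n))"

lemma card_Vstar_eq_sum: "card_Vstar n = (\<lambda>\<omega>. \<Sum>x\<in>Vn n. star_ind n x \<omega>)"
proof
  fix \<omega>
  have "Vstar (occupied g u n \<omega>) n
      = {x \<in> Vn n. occupied g u n \<omega> x \<and> (\<exists>y\<in>nbrs n x. occupied g u n \<omega> y)}"
    by (auto simp: Vstar_def Istar_def)
  then show "card_Vstar n \<omega> = (\<Sum>x\<in>Vn n. star_ind n x \<omega>)"
    by (simp add: card_Vstar_def star_ind_eq of_bool_def sum.inter_filter[OF finite_Vn, symmetric])
qed

lemma card_Vcirc_eq: "real (card (Vcirc (occupied g u n \<omega>) n)) = 2 ^ n - card_Vstar n \<omega>"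
proof -
  have sub: "Vstar (occupied g u n \<omega>) n \<subseteq> Vn n"
    by (auto simp: Vstar_def)
  then have "card (Vstar (occupied g u n \<omega>) n) \<le> 2 ^ n"
    using card_mono[OF finite_Vn sub] by (simp add: card_Vn)
  with sub show ?thesis
    unfolding Vcirc_def card_Vstar_def
    by (simp add: card_Diff_subset finite_subset[OF _ finite_Vn] card_Vn of_nat_diff)
qed

lemma random_variable_card_Vstar [measurable]: "n \<ge> 1 \<Longrightarrow> random_variable borel (card_Vstar n)"
  unfolding card_Vstar_eq_sum by measurable

lemma integrable_card_Vstar_square: "n \<ge> 1 \<Longrightarrow> integrable M (\<lambda>\<omega>. card_Vstar n \<omega> ^ 2)"
proof (rule integrable_const_bound[where B="(2 ^ n) ^ 2"])
  have "card (Vstar (occupied g u n \<omega>) n) \<le> 2 ^ n" for \<omega>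
    using card_mono[OF finite_Vn, of "Vstar (occupied g u n \<omega>) n" n] by (auto simp: Vstar_def card_Vn)
  then show "AE \<omega> in M. norm (card_Vstar n \<omega> ^ 2) \<le> (2 ^ n) ^ 2"
    by (auto simp: card_Vstar_def intro!: power_mono)
qed simp

lemma expectation_card_Vstar: "n \<ge> 2 \<Longrightarrow> expectation (card_Vstar n) = 2 ^ n * star_prob n"
  unfolding card_Vstar_eq_sum
  by (simp add: Bochner_Integration.integral_sum integrable_star_ind expectation_star_ind card_Vn)

lemma variance_card_Vstar:
  assumes n: "n \<ge> 2"
  shows "variance (card_Vstar n) \<le> 2 ^ n * (real n + 1) ^ 2 * occ_prob n"
proof -
  have "variance (card_Vstar n)
      = (\<Sum>x\<in>Vn n. \<Sum>x'\<in>Vn n. expectation (\<lambda>\<omega>. (star_ind n x \<omega> - expectation (star_ind n x))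
          * (star_ind n x' \<omega> - expectation (star_ind n x'))))"
    unfolding card_Vstar_eq_sum using n
    by (intro variance_sum_bounded[where B=1] random_variable_star_ind) (auto simp: star_ind_eq)
  also have "\<dots> \<le> (\<Sum>x\<in>Vn n. \<Sum>x'\<in>Vn n. if x' \<in> ball2 n x then occ_prob n else 0)"
    using n by (intro sum_mono covariance_star_ind_le)
  also have "\<dots> \<le> (\<Sum>x\<in>Vn n. (real n + 1) ^ 2 * occ_prob n)"
  proof (rule sum_mono)
    fix x assume x: "x \<in> Vn n"
    have "(\<Sum>x'\<in>Vn n. if x' \<in> ball2 n x then occ_prob n else 0) = real (card (Vn n \<inter> ball2 n x)) * occ_prob n"
      by (simp add: sum.If_cases finite_Vn)
    also have "\<dots> \<le> real (card (ball2 n x)) * occ_prob n"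
      using occ_prob_bounds[OF n] finite_ball2 by (intro mult_right_mono) (auto intro: card_mono)
    also have "\<dots> \<le> (real n + 1) ^ 2 * occ_prob n"
    proof -
      have "real (card (ball2 n x)) \<le> real ((n + 1) ^ 2)"
        using card_ball2_le[OF x] by (simp only: of_nat_le_iff)
      then show ?thesis
        using occ_prob_bounds[OF n] by (intro mult_right_mono) (simp_all add: add.commute)
    qed
    finally show "(\<Sum>x'\<in>Vn n. if x' \<in> ball2 n x then occ_prob n else 0) \<le> (real n + 1) ^ 2 * occ_prob n" .
  qed
  also have "\<dots> = 2 ^ n * (real n + 1) ^ 2 * occ_prob n"
    by (simp add: card_Vn)
  finally show ?thesis .
qed

text \<open>A relative error \<open>n p\<close> of the mean \<open>2^n n p^2\<close> of \<open>|V\<^sup>*|\<close>.\<close>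

definition dev_bound :: "nat \<Rightarrow> real" where
  "dev_bound n = 2 ^ n * (real n) ^ 2 * occ_prob n ^ 3"

lemma summable_variance_card_Vstar:
  "summable (\<lambda>n. variance (card_Vstar (n + 2)) / dev_bound (n + 2) ^ 2)"
proof -
  define f where "f n = 2 ^ n * (real n + 1) ^ 2 * occ_prob n / dev_bound n ^ 2" for n
  have "f \<in> O(\<lambda>n. real n powr - 2)"
    unfolding f_def dev_bound_def occ_prob_def by real_asymp
  moreover have "summable (\<lambda>n. norm (real n powr - 2))"
    using summable_real_powr_iff[of "- 2"] by simp
  ultimately have "summable f"
    by (rule summable_comparison_test_bigo[rotated])
  then have "summable (\<lambda>n. f (n + 2))"
    by (subst summable_iff_shift)
  moreover have "norm (variance (card_Vstar (n + 2)) / dev_bound (n + 2) ^ 2) \<le> f (n + 2)" for n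
  proof -
    have "0 \<le> variance (card_Vstar (n + 2))"
      by (intro integral_nonneg_AE) auto
    then show ?thesis
      unfolding f_def using variance_card_Vstar[of "n + 2"] by (simp add: divide_right_mono)
  qed
  ultimately show ?thesis
    by (rule summable_comparison_test'[where N=0])
qed

lemma AE_eventually_card_Vstar_close:
  "AE \<omega> in M. \<forall>\<^sub>F n in sequentially. \<bar>card_Vstar n \<omega> - 2 ^ n * star_prob n\<bar> < dev_bound n"
proof -
  have "AE \<omega> in M. \<forall>\<^sub>F n in sequentially.
      \<bar>card_Vstar (n + 2) \<omega> - expectation (card_Vstar (n + 2))\<bar> < dev_bound (n + 2)"
    using integrable_card_Vstar_square occ_prob_bounds summable_variance_card_Vstar
    by (intro AE_eventually_deviation_less) (auto simp: dev_bound_def)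
  then show ?thesis
  proof (rule eventually_mono)
    fix \<omega>
    assume "\<forall>\<^sub>F n in sequentially.
      \<bar>card_Vstar (n + 2) \<omega> - expectation (card_Vstar (n + 2))\<bar> < dev_bound (n + 2)"
    then have "\<forall>\<^sub>F n in sequentially.
        \<bar>card_Vstar (n + 2) \<omega> - 2 ^ (n + 2) * star_prob (n + 2)\<bar> < dev_bound (n + 2)"
      by (rule eventually_mono) (simp only: expectation_card_Vstar le_add2)
    then show "\<forall>\<^sub>F n in sequentially. \<bar>card_Vstar n \<omega> - 2 ^ n * star_prob n\<bar> < dev_bound n"
      by (rule eventually_sequentially_seg[THEN iffD1])
  qed
qed

lemma card_Vstar_relative_error:
  assumes n: "n \<ge> 2"
    and close: "\<bar>card_Vstar n \<omega> - 2 ^ n * star_prob n\<bar> < dev_bound n"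
  shows "\<bar>card_Vstar n \<omega> / (2 ^ n * real n powr (- 2 * cs + 1)) - 1\<bar> \<le> 2 * real n powr (- (cs - 1))"
proof -
  define p where "p = occ_prob n"
  have p: "0 < p" "p \<le> 1"
    using occ_prob_bounds[OF n] by (auto simp: p_def)
  have "real n powr (- 2 * cs + 1) = real n powr (real 2 * (- cs)) * real n powr 1"
    unfolding powr_add [symmetric] by simp
  moreover have "real n powr (real 2 * (- cs)) = p ^ 2"
    unfolding p_def occ_prob_def using n by (subst powr_power) auto
  ultimately have powr_2cs: "real n powr (- 2 * cs + 1) = real n * p ^ 2"
    using n by simp
  have "real n powr (- (cs - 1)) = real n powr (- cs) * real n powr 1"
    unfolding powr_add [symmetric] by simp
  then have powr_cs: "real n powr (- (cs - 1)) = real n * p"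
    using n by (simp add: p_def occ_prob_def)
  have "\<bar>card_Vstar n \<omega> - 2 ^ n * star_prob n\<bar> \<le> 2 ^ n * (real n * p) * (real n * p ^ 2)"
    using close by (simp add: dev_bound_def p_def power2_eq_square power3_eq_cube algebra_simps)
  moreover have "\<bar>star_prob n - real n * p ^ 2\<bar> \<le> real n * p * (real n * p ^ 2) / 2"
    using star_prob_approx[OF less_imp_le[OF p(1)] p(2), of n]
    by (simp add: star_prob_def p_def power2_eq_square power3_eq_cube algebra_simps)
  ultimately show ?thesis
    unfolding powr_2cs powr_cs using p n by (intro relative_error_compose) auto
qed

lemma AE_card_Vcirc_expansion:
  "AE \<omega> in M. \<exists>r :: nat \<Rightarrow> real. r \<in> O(\<lambda>n. real n powr (- (cs - 1))) \<and>
     (\<forall>\<^sub>F n in sequentially.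
        real (card (Vcirc (occupied g u n \<omega>) n)) = 2 ^ n * (1 - real n powr (- 2 * cs + 1) * (1 + r n)))"
  using AE_eventually_card_Vstar_close
proof (rule eventually_mono)
  fix \<omega>
  assume close: "\<forall>\<^sub>F n in sequentially. \<bar>card_Vstar n \<omega> - 2 ^ n * star_prob n\<bar> < dev_bound n"
  define r where "r n = card_Vstar n \<omega> / (2 ^ n * real n powr (- 2 * cs + 1)) - 1" for n
  have "\<forall>\<^sub>F n in sequentially. norm (r n) \<le> 2 * norm (real n powr (- (cs - 1)))"
    using eventually_conj[OF eventually_ge_at_top[of 2] close]
    by (rule eventually_mono) (auto simp: r_def dest: card_Vstar_relative_error)
  moreover have "\<forall>\<^sub>F n in sequentially.
      real (card (Vcirc (occupied g u n \<omega>) n)) = 2 ^ n * (1 - real n powr (- 2 * cs + 1) * (1 + r n))"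
    using eventually_ge_at_top[of 1]
    by (rule eventually_mono) (simp add: r_def card_Vcirc_eq field_simps)
  ultimately show "\<exists>r :: nat \<Rightarrow> real. r \<in> O(\<lambda>n. real n powr (- (cs - 1))) \<and>
    (\<forall>\<^sub>F n in sequentially.
      real (card (Vcirc (occupied g u n \<omega>) n)) = 2 ^ n * (1 - real n powr (- 2 * cs + 1) * (1 + r n)))"
    by blast
qed

end

theorem proposition6p3:
  fixes M :: "'a measure" and g :: "nat \<times> int list \<Rightarrow> 'a \<Rightarrow> real"
    and u :: "nat \<Rightarrow> real" and cs :: real
  assumes "prob_space M"
    and "prob_space.indep_vars M (\<lambda>_. borel) g {(n, x). n \<ge> 1 \<and> x \<in> Vn n}"
    and "\<And>n x. n \<ge> 1 \<Longrightarrow> x \<in> Vn n \<Longrightarrow>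
           distributed M lborel (g (n, x)) (\<lambda>t. ennreal (std_normal_density t))"
    and "\<And>n. n \<ge> 2 \<Longrightarrow>
           measure (density lborel (\<lambda>t. ennreal (std_normal_density t))) {.. - u n}
             = real n powr (- cs)"
    and "cs > 2"
  shows "(\<forall>\<beta>>0. \<forall>n\<ge>2. \<forall>\<omega>. \<forall>x\<in>Vcirc (occupied g u n \<omega>) n.
            pi_circ \<beta> (Hn g u n \<omega>) (occupied g u n \<omega>) n x
              = 1 / real (card (Vcirc (occupied g u n \<omega>) n)))
       \<and> (\<exists>\<Omega>'\<in>sets M. measure M \<Omega>' = 1 \<and>
            (\<forall>\<omega>\<in>\<Omega>'. \<exists>r :: nat \<Rightarrow> real.
               r \<in> O(\<lambda>n. real n powr (- (cs - 1))) \<and>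
               (\<forall>\<^sub>F n in sequentially.
                  real (card (Vcirc (occupied g u n \<omega>) n))
                    = 2 ^ n * (1 - real n powr (- 2 * cs + 1) * (1 + r n)))))"
proof -
  have "gaussian_landscape M g u cs"
    using assms by (simp add: gaussian_landscape_def gaussian_landscape_axioms_def sites_def)
  then interpret gaussian_landscape M g u cs .
  show ?thesis
    using pi_circ_Hn_uniform AE_imp_prob_one_event[OF AE_card_Vcirc_expansion] by blast
qed

end
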